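(* Let $M=\{M_\gamma\}_{\gamma\in\Gamma}$ and $N=\{N_\omega\}_{\omega\in\Omega}$ be defining families of functions on $\mathbb C^{k_1}$ and $\mathbb C^{k_2}$ respectively, and let $h\in\mathcal H(M\otimes N)$. Suppose $N$ satisfies: (I) for every $\omega\in\Omega$ there exist $\omega'\in\Omega$ and a bounded integrable nonnegative function $L$ on $\mathbb C^{k_2}$ with $N_\omega\le LN_{\omega'}$ and $L(w)\to0$ as $|w|\to\infty$; (II) for every $\omega\in\Omega$ there exist $\omega'\in\Omega$, a neighborhood $B$ of the origin in $\mathbb C^{k_2}$ and $C>0$ with $N_\omega(w)\le CN_{\omega'}(w+w')$ for all $w\in\mathbb C^{k_2}$, $w'\in B$. Then $h(z,\cdot)\in\mathcal H(N)$ for every $z\in\mathbb C^{k_1}$, and for every $v\in\mathcal H'(N)$ the function $h_v(z)=\langle v,h(z,\cdot)\rangle$ belongs to $\mathcal H(M)$.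
   Context: A defining family of functions on $\mathbb R^n$ is a family $M=\{M_\gamma\}_{\gamma\in\Gamma}$ of nonnegative measurable functions on $\mathbb R^n$, each bounded on bounded subsets, such that: (a) for all $\gamma_1,\gamma_2\in\Gamma$ there are $\gamma\in\Gamma$ and $C>0$ with $M_\gamma\ge C(M_{\gamma_1}+M_{\gamma_2})$; (b) there is a countable $\Gamma'\subset\Gamma$ such that for every $\gamma\in\Gamma$ there are $\gamma'\in\Gamma'$ and $C>0$ with $CM_\gamma\le M_{\gamma'}$; (c) for every $x$ there are $\gamma\in\Gamma$, a neighborhood $O(x)$ of $x$ and $C>0$ with $M_\gamma\ge C$ on $O(x)$. A defining family on $\mathbb C^k$ is a defining family on the underlying real space $\mathbb R^{2k}$. $\mathcal H(M)$ is the space of entire analytic functions $f$ on $\mathbb C^k$ with finite seminorms $\|f\|_\gamma=\sup_{z\in\mathbb C^k}M_\gamma(z)|f(z)|$, $\gamma\in\Gamma$, topologized by them; $\mathcal H'(N)$ is the continuous dual of $\mathcal H(N)$, $\langle\cdot,\cdot\rangle$ the dual pairing. $M\otimes N$ is the defining family on $\mathbb C^{k_1+k_2}$ given by $(M\otimes N)_{\gamma\omega}(z,w)=M_\gamma(z)N_\omega(w)$, $(\gamma,\omega)\in\Gamma\times\Omega$. *)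

theory Defs
  imports "HOL-Analysis.Analysis"
begin

text \<open>C^k is modelled as complex ^ 'k (k = CARD('k)); C^(k1+k2) as complex ^ ('k1 + 'k2).\<close>

definition defining_family :: "'g set \<Rightarrow> ('g \<Rightarrow> complex ^ 'k \<Rightarrow> real) \<Rightarrow> bool" where
  "defining_family G M \<longleftrightarrow>
     (\<forall>g\<in>G. (\<forall>z. 0 \<le> M g z) \<and> M g \<in> borel_measurable lebesgue
             \<and> (\<forall>S. bounded S \<longrightarrow> bounded (M g ` S))) \<and>
     (\<forall>g1\<in>G. \<forall>g2\<in>G. \<exists>g\<in>G. \<exists>C>0. \<forall>z. M g z \<ge> C * (M g1 z + M g2 z)) \<and>
     (\<exists>G'\<subseteq>G. countable G' \<and> (\<forall>g\<in>G. \<exists>g'\<in>G'. \<exists>C>0. \<forall>z. C * M g z \<le> M g' z)) \<and>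
     (\<forall>x. \<exists>g\<in>G. \<exists>U. open U \<and> x \<in> U \<and> (\<exists>C>0. \<forall>z\<in>U. M g z \<ge> C))"

definition entire_cn :: "(complex ^ 'k \<Rightarrow> complex) \<Rightarrow> bool" where
  "entire_cn f \<longleftrightarrow>
     (\<forall>z. \<exists>D. (f has_derivative D) (at z) \<and> (\<forall>c x. D (c *s x) = c * D x))"

definition Hspace :: "'g set \<Rightarrow> ('g \<Rightarrow> complex ^ 'k \<Rightarrow> real) \<Rightarrow> (complex ^ 'k \<Rightarrow> complex) set" where
  "Hspace G M = {f. entire_cn f \<and> (\<forall>g\<in>G. bdd_above (range (\<lambda>z. M g z * norm (f z))))}"

definition hseminorm :: "('g \<Rightarrow> complex ^ 'k \<Rightarrow> real) \<Rightarrow> 'g \<Rightarrow> (complex ^ 'k \<Rightarrow> complex) \<Rightarrow> real" where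
  "hseminorm M g f = (SUP z. M g z * norm (f z))"

text \<open>Continuous dual H'(M): complex-linear functionals on H(M) that are continuous for the
  locally convex topology of the seminorms, i.e. bounded by a constant times the maximum of
  finitely many seminorms.\<close>
definition Hdual :: "'g set \<Rightarrow> ('g \<Rightarrow> complex ^ 'k \<Rightarrow> real) \<Rightarrow> ((complex ^ 'k \<Rightarrow> complex) \<Rightarrow> complex) set" where
  "Hdual G M = {v.
     (\<forall>f\<in>Hspace G M. \<forall>g\<in>Hspace G M. v (\<lambda>z. f z + g z) = v f + v g) \<and>
     (\<forall>f\<in>Hspace G M. \<forall>c. v (\<lambda>z. c * f z) = c * v f) \<and>
     (\<exists>F C. finite F \<and> F \<subseteq> G \<and> 0 \<le> C \<and>
        (\<forall>f\<in>Hspace G M. norm (v f) \<le> C * (\<Sum>g\<in>F. hseminorm M g f)))}"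

definition cjoin :: "complex ^ 'a \<Rightarrow> complex ^ 'b \<Rightarrow> complex ^ ('a + 'b)" where
  "cjoin z w = (\<chi> i. case i of Inl a \<Rightarrow> z $ a | Inr b \<Rightarrow> w $ b)"

definition tensor_family :: "('g \<Rightarrow> complex ^ 'a \<Rightarrow> real) \<Rightarrow> ('o \<Rightarrow> complex ^ 'b \<Rightarrow> real)
     \<Rightarrow> ('g \<times> 'o) \<Rightarrow> complex ^ ('a + 'b) \<Rightarrow> real" where
  "tensor_family M N go u =
     M (fst go) (\<chi> a. u $ Inl a) * N (snd go) (\<chi> b. u $ Inr b)"

end

theory Submission
  imports Defs "HOL-Complex_Analysis.Cauchy_Integral_Formula"
begin

(*
  The slice h(z,.) lies in H(N) because M is bounded below near z, and the growth of
  h_v(z) = <v, h(z,.)> follows from the continuity estimate of v.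

  For the analyticity of h_v one cannot simply differentiate under v: the z-derivatives of h
  are not known to have slices in H(N).  Instead v is only paired with balanced combinations
  sum_j c_j h(z + y_j, .), where sum_j c_j = 0 and sum_j c_j y_j = 0.  These annihilate affine
  functions of z, so the Cauchy estimates in z bound N_omega(w) |sum_j c_j h(z + y_j, w)| by
  K sum_j |c_j| |y_j|^2 uniformly in w, and the continuity of v transfers this bound to the
  second differences of h_v.  Such a bound alone forces complex differentiability: the
  difference quotients of h_v along the coordinate axes converge, and their limits form a
  complex-linear map approximating h_v to second order.
*)

lemma cjoin_smult: "cjoin (c *s x) (c *s y) = c *s cjoin x y"
  by (simp add: cjoin_def vec_eq_iff split: sum.split)

lemma cjoin_eq_add: "cjoin z w = cjoin z 0 + cjoin 0 w"
  by (simp add: cjoin_def vec_eq_iff split: sum.split)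

lemma bounded_linear_cjoin_left: "bounded_linear (\<lambda>x. cjoin x 0)"
  and bounded_linear_cjoin_right: "bounded_linear (\<lambda>w. cjoin 0 w)"
  by (simp_all add: linear_conv_bounded_linear[symmetric] linear_iff cjoin_def vec_eq_iff
      split: sum.split)

lemma tensor_family_cjoin: "tensor_family M N (g, \<omega>) (cjoin z w) = M g z * N \<omega> w"
  by (simp add: tensor_family_def cjoin_def)

lemma entire_cn_compose_affine:
  assumes f: "entire_cn f" and T: "bounded_linear T" and hom: "\<And>c x. T (c *s x) = c *s T x"
  shows "entire_cn (\<lambda>x. f (T x + b))"
  unfolding entire_cn_def
proof
  fix x
  obtain D where D: "(f has_derivative D) (at (T x + b))" "\<And>c y. D (c *s y) = c * D y"
    using f unfolding entire_cn_def by blast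
  have "((\<lambda>x. T x + b) has_derivative T) (at x)"
    using T by (auto intro!: derivative_eq_intros bounded_linear_imp_has_derivative)
  from has_derivative_compose[OF this D(1)]
  have "((\<lambda>x. f (T x + b)) has_derivative (\<lambda>y. D (T y))) (at x)" .
  moreover have "D (T (c *s y)) = c * D (T y)" for c y
    by (simp add: hom D(2))
  ultimately show "\<exists>D. ((\<lambda>x. f (T x + b)) has_derivative D) (at x) \<and> (\<forall>c y. D (c *s y) = c * D y)"
    by blast
qed

lemma entire_cn_slice_right:
  fixes h :: "complex^('a::finite + 'b::finite) \<Rightarrow> complex"
  assumes "entire_cn h"
  shows "entire_cn (\<lambda>w. h (cjoin z w))"
proof -
  have "entire_cn (\<lambda>w. h (cjoin 0 w + cjoin z 0))"
    using cjoin_smult[of _ 0]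
    by (intro entire_cn_compose_affine[OF assms bounded_linear_cjoin_right]) simp
  moreover have "cjoin 0 w + cjoin z 0 = cjoin z w" for w :: "complex^'b"
    by (metis add.commute cjoin_eq_add)
  ultimately show ?thesis by (simp only:)
qed

lemma entire_cn_slice_left:
  fixes h :: "complex^('a::finite + 'b::finite) \<Rightarrow> complex"
  assumes "entire_cn h"
  shows "entire_cn (\<lambda>z. h (cjoin z w))"
proof -
  have "entire_cn (\<lambda>z. h (cjoin z 0 + cjoin 0 w))"
    using cjoin_smult[of _ _ 0]
    by (intro entire_cn_compose_affine[OF assms bounded_linear_cjoin_left]) simp
  moreover have "cjoin z 0 + cjoin 0 w = cjoin z w" for z :: "complex^'a"
    by (metis cjoin_eq_add)
  ultimately show ?thesis by (simp only:)
qed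

lemma entire_cn_lincomb:
  assumes "entire_cn f" "entire_cn g"
  shows "entire_cn (\<lambda>x. a * f x + b * g x)"
  unfolding entire_cn_def
proof
  fix z
  from assms obtain Df Dg where f: "(f has_derivative Df) (at z)" "\<forall>c x. Df (c *s x) = c * Df x"
    and g: "(g has_derivative Dg) (at z)" "\<forall>c x. Dg (c *s x) = c * Dg x"
    unfolding entire_cn_def by metis
  have "((\<lambda>x. a * f x + b * g x) has_derivative (\<lambda>x. a * Df x + b * Dg x)) (at z)"
    by (intro derivative_intros f g)
  moreover have "\<forall>c x. a * Df (c *s x) + b * Dg (c *s x) = c * (a * Df x + b * Dg x)"
    using f(2) g(2) by (simp add: algebra_simps)
  ultimately show "\<exists>D. ((\<lambda>x. a * f x + b * g x) has_derivative D) (at z) \<and>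
      (\<forall>c x. D (c *s x) = c * D x)"
    by blast
qed

lemma entire_cn_cmult: "entire_cn f \<Longrightarrow> entire_cn (\<lambda>x. a * f x)"
  using entire_cn_lincomb[of f f a 0] by simp

lemma defining_family_nonneg: "defining_family G M \<Longrightarrow> g \<in> G \<Longrightarrow> 0 \<le> M g z"
  by (simp add: defining_family_def)

lemma defining_family_locally_positive:
  assumes "defining_family G M"
  obtains g r C where "g \<in> G" "0 < r" "0 < C" "\<And>x. norm (x - z) \<le> r \<Longrightarrow> C \<le> M g x"
proof -
  obtain g U C where "g \<in> G" "open U" "z \<in> U" "0 < C" "\<forall>x\<in>U. C \<le> M g x"
    using assms unfolding defining_family_def by meson
  moreover from \<open>open U\<close> \<open>z \<in> U\<close> obtain r where "0 < r" "cball z r \<subseteq> U"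
    using open_contains_cball by blast
  moreover have "x \<in> cball z r" if "norm (x - z) \<le> r" for x
    using that by (simp add: dist_norm norm_minus_commute)
  ultimately show ?thesis
    using that[of g r C] by blast
qed

lemma Hspace_le_hseminorm:
  assumes "f \<in> Hspace G M" "g \<in> G"
  shows "M g z * norm (f z) \<le> hseminorm M g f"
  using assms unfolding Hspace_def hseminorm_def by (auto intro: cSUP_upper)

lemma hseminorm_nonneg:
  assumes "f \<in> Hspace G M" "g \<in> G" "0 \<le> M g z"
  shows "0 \<le> hseminorm M g f"
  using mult_nonneg_nonneg[OF assms(3) norm_ge_zero] Hspace_le_hseminorm[OF assms(1,2)]
  by (rule order_trans)

lemma Hspace_lincomb:
  assumes f: "f \<in> Hspace W N" and g: "g \<in> Hspace W N" and N: "\<forall>\<omega>\<in>W. \<forall>w. 0 \<le> N \<omega> w"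
  shows "(\<lambda>x. a * f x + b * g x) \<in> Hspace W N"
  unfolding Hspace_def
proof (intro CollectI conjI ballI)
  show "entire_cn (\<lambda>x. a * f x + b * g x)"
    using f g by (intro entire_cn_lincomb) (auto simp: Hspace_def)
  fix \<omega> assume \<omega>: "\<omega> \<in> W"
  have "N \<omega> x * norm (a * f x + b * g x) \<le>
      norm a * hseminorm N \<omega> f + norm b * hseminorm N \<omega> g" for x
  proof -
    have "N \<omega> x * norm (a * f x + b * g x) \<le> N \<omega> x * (norm a * norm (f x) + norm b * norm (g x))"
      using N \<omega> by (intro mult_left_mono) (auto intro: norm_triangle_le simp: norm_mult)
    also have "\<dots> = norm a * (N \<omega> x * norm (f x)) + norm b * (N \<omega> x * norm (g x))"
      by (simp add: algebra_simps)
    also have "\<dots> \<le> norm a * hseminorm N \<omega> f + norm b * hseminorm N \<omega> g"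
      using Hspace_le_hseminorm[OF f \<omega>] Hspace_le_hseminorm[OF g \<omega>]
      by (intro add_mono mult_left_mono) auto
    finally show ?thesis .
  qed
  then show "bdd_above (range (\<lambda>x. N \<omega> x * norm (a * f x + b * g x)))"
    by (auto simp: bdd_above_def)
qed

lemma Hdual_lincomb:
  assumes v: "v \<in> Hdual W N" and f: "f \<in> Hspace W N" and g: "g \<in> Hspace W N"
    and N: "\<forall>\<omega>\<in>W. \<forall>w. 0 \<le> N \<omega> w"
  shows "v (\<lambda>x. a * f x + b * g x) = a * v f + b * v g"
proof -
  have "(\<lambda>x. a * f x) \<in> Hspace W N" "(\<lambda>x. b * g x) \<in> Hspace W N"
    using Hspace_lincomb[OF f g N, of a 0] Hspace_lincomb[OF f g N, of 0 b] by simp_all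
  moreover have "\<forall>f\<in>Hspace W N. \<forall>g\<in>Hspace W N. v (\<lambda>z. f z + g z) = v f + v g"
    and "\<forall>f\<in>Hspace W N. \<forall>c. v (\<lambda>z. c * f z) = c * v f"
    using v unfolding Hdual_def by blast+
  ultimately show ?thesis
    using f g by simp
qed

lemma Hdual_sum_list:
  assumes v: "v \<in> Hdual W N" and N: "\<forall>\<omega>\<in>W. \<forall>w. 0 \<le> N \<omega> w"
    and fs: "\<forall>(c, f)\<in>set xs. f \<in> Hspace W N"
  shows "(\<lambda>x. \<Sum>(c, f)\<leftarrow>xs. c * f x) \<in> Hspace W N \<and>
         v (\<lambda>x. \<Sum>(c, f)\<leftarrow>xs. c * f x) = (\<Sum>(c, f)\<leftarrow>xs. c * v f)"
  using fs
proof (induction xs)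
  case Nil
  have zero: "(\<lambda>x. 0) \<in> Hspace W N"
    by (auto simp: Hspace_def entire_cn_def intro!: exI[of _ "\<lambda>_. 0"])
  then show ?case
    using Hdual_lincomb[OF v zero zero N, of 0 0] by simp
next
  case (Cons p xs)
  obtain c f where p: "p = (c, f)" by fastforce
  with Cons have f: "f \<in> Hspace W N" and IH: "(\<lambda>x. \<Sum>(c, f)\<leftarrow>xs. c * f x) \<in> Hspace W N"
      "v (\<lambda>x. \<Sum>(c, f)\<leftarrow>xs. c * f x) = (\<Sum>(c, f)\<leftarrow>xs. c * v f)"
    by auto
  have "(\<lambda>x. c * f x + 1 * (\<Sum>(c, f)\<leftarrow>xs. c * f x)) \<in> Hspace W N"
    by (rule Hspace_lincomb[OF f IH(1) N])
  moreover have "v (\<lambda>x. c * f x + 1 * (\<Sum>(c, f)\<leftarrow>xs. c * f x)) =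
      c * v f + 1 * v (\<lambda>x. \<Sum>(c, f)\<leftarrow>xs. c * f x)"
    by (rule Hdual_lincomb[OF v f IH(1) N])
  ultimately show ?case
    using IH(2) p by simp
qed

lemma Hdual_bound:
  assumes "v \<in> Hdual W N"
  obtains F C where "finite F" "F \<subseteq> W" "0 \<le> C"
    "\<And>f B. f \<in> Hspace W N \<Longrightarrow> (\<And>\<omega> w. \<omega> \<in> F \<Longrightarrow> N \<omega> w * norm (f w) \<le> B \<omega>) \<Longrightarrow>
       norm (v f) \<le> C * (\<Sum>\<omega>\<in>F. B \<omega>)"
proof -
  obtain F C where F: "finite F" "F \<subseteq> W" "0 \<le> C"
    and v: "\<And>f. f \<in> Hspace W N \<Longrightarrow> norm (v f) \<le> C * (\<Sum>\<omega>\<in>F. hseminorm N \<omega> f)"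
    using assms unfolding Hdual_def by blast
  show ?thesis
  proof (rule that[OF F])
    fix f B assume f: "f \<in> Hspace W N" and B: "\<And>\<omega> w. \<omega> \<in> F \<Longrightarrow> N \<omega> w * norm (f w) \<le> B \<omega>"
    have "hseminorm N \<omega> f \<le> B \<omega>" if "\<omega> \<in> F" for \<omega>
      unfolding hseminorm_def by (rule cSUP_least) (use B that in auto)
    then have "C * (\<Sum>\<omega>\<in>F. hseminorm N \<omega> f) \<le> C * (\<Sum>\<omega>\<in>F. B \<omega>)"
      using F(3) by (intro mult_left_mono sum_mono) auto
    with v[OF f] show "norm (v f) \<le> C * (\<Sum>\<omega>\<in>F. B \<omega>)" by linarith
  qed
qed

section \<open>Slices of elements of H(M \<otimes> N)\<close>

lemma tensor_slice_le_hseminorm: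
  assumes h: "h \<in> Hspace (G \<times> W) (tensor_family M N)" and "g \<in> G" "\<omega> \<in> W"
    and "0 \<le> N \<omega> w" "0 < C" "C \<le> M g z"
  shows "N \<omega> w * norm (h (cjoin z w)) \<le> hseminorm (tensor_family M N) (g, \<omega>) h / C"
proof -
  have "C * (N \<omega> w * norm (h (cjoin z w))) \<le> M g z * (N \<omega> w * norm (h (cjoin z w)))"
    by (intro mult_right_mono) (simp_all add: assms)
  also have "\<dots> \<le> hseminorm (tensor_family M N) (g, \<omega>) h"
    using Hspace_le_hseminorm[OF h, of "(g, \<omega>)" "cjoin z w"] assms
    by (simp add: tensor_family_cjoin mult.assoc)
  finally show ?thesis
    using \<open>0 < C\<close> by (simp add: field_simps)
qed

lemma Hspace_slice:
  assumes M: "defining_family G M" and N: "defining_family W N"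
    and h: "h \<in> Hspace (G \<times> W) (tensor_family M N)"
  shows "(\<lambda>w. h (cjoin z w)) \<in> Hspace W N"
proof -
  obtain g r C where g: "g \<in> G" "0 < r" "0 < C" "\<And>x. norm (x - z) \<le> r \<Longrightarrow> C \<le> M g x"
    using defining_family_locally_positive[OF M, of z] by blast
  have Cz: "C \<le> M g z"
    using g(4)[of z] g(2) by simp
  have "bdd_above (range (\<lambda>w. N \<omega> w * norm (h (cjoin z w))))" if "\<omega> \<in> W" for \<omega>
    by (rule bdd_aboveI2)
      (rule tensor_slice_le_hseminorm[OF h g(1) that defining_family_nonneg[OF N that] g(3) Cz])
  then show ?thesis
    using h entire_cn_slice_right by (auto simp: Hspace_def)
qed

lemma bdd_above_weighted_pairing_slices:
  assumes M: "defining_family G M" and N: "defining_family W N"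
    and h: "h \<in> Hspace (G \<times> W) (tensor_family M N)" and v: "v \<in> Hdual W N" and g: "g \<in> G"
  shows "bdd_above (range (\<lambda>z. M g z * norm (v (\<lambda>w. h (cjoin z w)))))"
proof -
  obtain F C where F: "finite F" "F \<subseteq> W" "0 \<le> C"
    and vb: "\<And>f B. f \<in> Hspace W N \<Longrightarrow> (\<And>\<omega> w. \<omega> \<in> F \<Longrightarrow> N \<omega> w * norm (f w) \<le> B \<omega>) \<Longrightarrow>
       norm (v f) \<le> C * (\<Sum>\<omega>\<in>F. B \<omega>)"
    using Hdual_bound[OF v] by blast
  define A where "A = (\<Sum>\<omega>\<in>F. hseminorm (tensor_family M N) (g, \<omega>) h)"
  have "M g z * norm (v (\<lambda>w. h (cjoin z w))) \<le> C * A" for z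
  proof (cases "M g z = 0")
    case True
    have "0 \<le> hseminorm (tensor_family M N) (g, \<omega>) h" if "\<omega> \<in> F" for \<omega>
      using that F(2) g defining_family_nonneg[OF M g] defining_family_nonneg[OF N]
      by (intro hseminorm_nonneg[OF h, of _ "cjoin z 0"]) (auto simp: tensor_family_cjoin)
    then show ?thesis
      using True F(3) by (simp add: A_def sum_nonneg)
  next
    case False
    then have pos: "0 < M g z"
      using defining_family_nonneg[OF M g] by (simp add: less_le)
    have "norm (v (\<lambda>w. h (cjoin z w)))
        \<le> C * (\<Sum>\<omega>\<in>F. hseminorm (tensor_family M N) (g, \<omega>) h / M g z)"
      using F(2) by (intro vb Hspace_slice[OF M N h] tensor_slice_le_hseminorm[OF h g] pos)
        (auto intro: defining_family_nonneg[OF N])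
    then show ?thesis
      using pos by (simp add: A_def sum_divide_distrib[symmetric] field_simps)
  qed
  then show ?thesis
    by (intro bdd_aboveI2)
qed

section \<open>Second differences and complex differentiability\<close>

lemma norm_vec_smult: "norm (c *s (x::complex^'n)) = norm c * norm x"
proof -
  have "norm (c *s x) = L2_set (\<lambda>i. norm c * norm (x $ i)) UNIV"
    by (simp add: norm_vec_def norm_mult)
  also have "\<dots> = norm c * L2_set (\<lambda>i. norm (x $ i)) UNIV"
    by (simp add: L2_set_right_distrib)
  finally show ?thesis
    by (simp add: norm_vec_def)
qed

definition balanced :: "(complex \<times> (complex^'n)) list \<Rightarrow> bool" where
  "balanced ys \<longleftrightarrow> (\<Sum>(c, y)\<leftarrow>ys. c) = 0 \<and> (\<Sum>(c, y)\<leftarrow>ys. c *s y) = 0"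

lemma sum_list_comb_affine:
  fixes ys :: "(complex \<times> (complex^'n)) list"
  assumes "linear D" "\<And>c x. D (c *s x) = c * D x"
  shows "(\<Sum>(c, y)\<leftarrow>ys. c * (a + D y)) = (\<Sum>(c, y)\<leftarrow>ys. c) * a + D (\<Sum>(c, y)\<leftarrow>ys. c *s y)"
  by (induction ys) (auto simp: assms linear_0 linear_add algebra_simps)

lemma balanced_annihilates_affine:
  fixes ys :: "(complex \<times> (complex^'n)) list"
  assumes "balanced ys" "linear D" "\<And>c x. D (c *s x) = c * D x"
  shows "(\<Sum>(c, y)\<leftarrow>ys. c * (a + D y)) = 0"
  using assms by (simp add: sum_list_comb_affine balanced_def linear_0)

lemma norm_sum_list_comb_le:
  fixes R :: "'a \<Rightarrow> complex"
  assumes "\<forall>(c, y)\<in>set ys. norm (R y) \<le> K * Q y"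
  shows "norm (\<Sum>(c, y)\<leftarrow>ys. c * R y) \<le> K * (\<Sum>(c, y)\<leftarrow>ys. norm c * Q y)"
  using assms
proof (induction ys)
  case (Cons p ys)
  obtain c y where p: "p = (c, y)" by fastforce
  have "norm (c * R y + (\<Sum>(c, y)\<leftarrow>ys. c * R y)) \<le> norm (c * R y) + norm (\<Sum>(c, y)\<leftarrow>ys. c * R y)"
    by (rule norm_triangle_ineq)
  also have "\<dots> = norm c * norm (R y) + norm (\<Sum>(c, y)\<leftarrow>ys. c * R y)"
    by (simp add: norm_mult)
  also have "\<dots> \<le> norm c * (K * Q y) + K * (\<Sum>(c, y)\<leftarrow>ys. norm c * Q y)"
    using Cons p by (intro add_mono mult_left_mono) auto
  finally show ?case
    using p by (simp add: algebra_simps)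
qed simp

definition second_differences_le :: "(complex^'n \<Rightarrow> complex) \<Rightarrow> complex^'n \<Rightarrow> real \<Rightarrow> real \<Rightarrow> bool" where
  "second_differences_le \<Phi> z r K \<longleftrightarrow> (\<forall>ys. balanced ys \<longrightarrow> (\<forall>(c, y)\<in>set ys. norm y \<le> r) \<longrightarrow>
     norm (\<Sum>(c, y)\<leftarrow>ys. c * \<Phi> (z + y)) \<le> K * (\<Sum>(c, y)\<leftarrow>ys. norm c * norm y ^ 2))"

lemma second_differences_leD:
  "second_differences_le \<Phi> z r K \<Longrightarrow> balanced ys \<Longrightarrow> \<forall>(c, y)\<in>set ys. norm y \<le> r \<Longrightarrow>
    norm (\<Sum>(c, y)\<leftarrow>ys. c * \<Phi> (z + y)) \<le> K * (\<Sum>(c, y)\<leftarrow>ys. norm c * norm y ^ 2)"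
  unfolding second_differences_le_def by blast

definition diff_quotient :: "(complex^'n \<Rightarrow> complex) \<Rightarrow> complex^'n \<Rightarrow> complex^'n \<Rightarrow> nat \<Rightarrow> complex" where
  "diff_quotient \<Phi> z e n = of_nat (Suc n) * (\<Phi> (z + (1 / of_nat (Suc n)) *s e) - \<Phi> z)"

lemma norm_smult_inverse_Suc:
  "norm ((1 / of_nat (Suc n) :: complex) *s x) = norm x / real (Suc n)"
  by (simp add: norm_vec_smult norm_divide del: of_nat_Suc)

lemma Cauchy_if_dist_le_harmonic:
  fixes X :: "nat \<Rightarrow> 'a::metric_space"
  assumes "\<And>m n. N \<le> m \<Longrightarrow> N \<le> n \<Longrightarrow> dist (X m) (X n) \<le> B / real (Suc m) + B / real (Suc n)"
  shows "Cauchy X"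
proof (rule metric_CauchyI)
  fix e :: real assume "0 < e"
  have "(\<lambda>n. B / real (Suc n)) \<longlonglongrightarrow> 0"
    by (rule LIMSEQ_Suc[OF lim_const_over_n])
  then have "eventually (\<lambda>n. B / real (Suc n) < e / 2) sequentially"
    using \<open>0 < e\<close> by (intro order_tendstoD) auto
  then obtain M where M: "\<And>n. M \<le> n \<Longrightarrow> B / real (Suc n) < e / 2"
    by (auto simp: eventually_sequentially)
  have "dist (X m) (X n) < e" if "max M N \<le> m" "max M N \<le> n" for m n
  proof -
    have "dist (X m) (X n) \<le> B / real (Suc m) + B / real (Suc n)"
      "B / real (Suc m) < e / 2" "B / real (Suc n) < e / 2"
      using assms M that by auto
    then show ?thesis by linarith
  qed
  then show "\<exists>M. \<forall>m\<ge>M. \<forall>n\<ge>M. dist (X m) (X n) < e"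
    by blast
qed

lemma convergent_diff_quotient:
  fixes \<Phi> :: "complex^'n \<Rightarrow> complex"
  assumes \<Phi>: "second_differences_le \<Phi> z r K" and r: "0 < r"
  shows "convergent (diff_quotient \<Phi> z e)"
proof -
  define \<tau> :: "nat \<Rightarrow> complex" where "\<tau> n = 1 / of_nat (Suc n)" for n
  have "(\<lambda>n. norm e / real (Suc n)) \<longlonglongrightarrow> 0"
    by (rule LIMSEQ_Suc[OF lim_const_over_n])
  then have "eventually (\<lambda>n. norm e / real (Suc n) < r) sequentially"
    using r by (intro order_tendstoD) auto
  then obtain N where "\<And>n. N \<le> n \<Longrightarrow> norm e / real (Suc n) < r"
    by (auto simp: eventually_sequentially)
  then have N: "norm (\<tau> n *s e) < r" if "N \<le> n" for n
    unfolding \<tau>_def norm_smult_inverse_Suc using that .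
  have "dist (diff_quotient \<Phi> z e m) (diff_quotient \<Phi> z e n)
      \<le> K * norm e ^ 2 / real (Suc m) + K * norm e ^ 2 / real (Suc n)"
    if "N \<le> m" "N \<le> n" for m n
  proof -
    define ys :: "(complex \<times> (complex^'n)) list"
      where "ys = [(of_nat (Suc m), \<tau> m *s e), (- of_nat (Suc n), \<tau> n *s e),
        (of_nat n - of_nat m, 0)]"
    have "balanced ys"
      unfolding balanced_def ys_def \<tau>_def
      by (rule conjI) (simp, simp add: vector_smult_assoc vector_smult_lneg del: of_nat_Suc)
    moreover have "\<forall>(c, y)\<in>set ys. norm y \<le> r"
      using N[OF that(1)] N[OF that(2)] r by (auto simp: ys_def)
    moreover have "(\<Sum>(c, y)\<leftarrow>ys. c * \<Phi> (z + y)) = diff_quotient \<Phi> z e m - diff_quotient \<Phi> z e n"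
      by (simp add: ys_def diff_quotient_def \<tau>_def algebra_simps)
    moreover have "(\<Sum>(c, y)\<leftarrow>ys. norm c * norm y ^ 2) =
        norm e ^ 2 / real (Suc m) + norm e ^ 2 / real (Suc n)"
      by (simp add: ys_def \<tau>_def norm_smult_inverse_Suc power2_eq_square del: of_nat_Suc)
    ultimately show ?thesis
      using second_differences_leD[OF \<Phi>, of ys] by (simp add: dist_norm distrib_left)
  qed
  then show ?thesis
    by (intro Cauchy_convergent Cauchy_if_dist_le_harmonic[where N = N and B = "K * norm e ^ 2"])
      (simp add: mult.assoc)
qed

lemma diff_quotient_linearization_le:
  fixes \<Phi> :: "complex^'n \<Rightarrow> complex"
  assumes \<Phi>: "second_differences_le \<Phi> z r K" and u: "norm u \<le> r" and n: "1 / real (Suc n) \<le> r"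
  shows "norm (\<Phi> (z + u) - \<Phi> z - (\<Sum>i\<in>UNIV. u $ i * diff_quotient \<Phi> z (axis i 1) n))
    \<le> K * (norm u ^ 2 + (\<Sum>i\<in>UNIV. norm (u $ i)) / real (Suc n))"
proof -
  define \<tau> :: "nat \<Rightarrow> complex" where "\<tau> n = 1 / of_nat (Suc n)" for n
  have dq: "diff_quotient \<Phi> z e n = of_nat (Suc n) * (\<Phi> (z + \<tau> n *s e) - \<Phi> z)" for e
    by (simp add: diff_quotient_def \<tau>_def)
  have \<tau>_cancel: "of_nat (Suc n) * c * \<tau> n = c" for c
    by (simp add: \<tau>_def del: of_nat_Suc)
  obtain bs where bs: "distinct bs" "set bs = (UNIV :: 'n set)"
    using finite_distinct_list[OF finite_class.finite_UNIV] by blast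
  \<comment> \<open>The points \<open>axis i 1 / (n + 1)\<close> produce the quotients; the basis expansion of \<open>u\<close>
    makes the combination balanced.\<close>
  define ys :: "(complex \<times> (complex^'n)) list"
    where "ys = (1, u) # ((\<Sum>i\<in>UNIV. of_nat (Suc n) * u $ i) - 1, 0) #
      map (\<lambda>i. (- (of_nat (Suc n) * u $ i), \<tau> n *s axis i 1)) bs"
  have "balanced ys"
    using basis_expansion[of u]
    by (simp add: balanced_def ys_def sum_list_distinct_conv_sum_set[OF bs(1)] bs(2) o_def
        vector_smult_assoc \<tau>_cancel vector_smult_lneg sum_negf del: of_nat_Suc)
  moreover have "\<forall>(c, y)\<in>set ys. norm y \<le> r"
    using u n order_trans[OF _ n, of 0]
    by (auto simp: ys_def \<tau>_def norm_smult_inverse_Suc simp del: of_nat_Suc)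
  moreover have "(\<Sum>(c, y)\<leftarrow>ys. c * \<Phi> (z + y)) =
      \<Phi> (z + u) - \<Phi> z - (\<Sum>i\<in>UNIV. u $ i * diff_quotient \<Phi> z (axis i 1) n)"
    by (simp add: ys_def dq sum_list_distinct_conv_sum_set[OF bs(1)] bs(2) o_def
        sum_distrib_left sum_distrib_right sum_subtractf sum_negf right_diff_distrib algebra_simps
        del: of_nat_Suc)
  moreover have "(\<Sum>(c, y)\<leftarrow>ys. norm c * norm y ^ 2) =
      norm u ^ 2 + (\<Sum>i\<in>UNIV. norm (u $ i)) / real (Suc n)"
    by (simp add: ys_def \<tau>_def sum_list_distinct_conv_sum_set[OF bs(1)] bs(2) o_def
        norm_smult_inverse_Suc norm_mult power2_eq_square sum_divide_distrib del: of_nat_Suc)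
  ultimately show ?thesis
    using second_differences_leD[OF \<Phi>, of ys] by simp
qed

lemma has_derivative_if_remainder_quadratic:
  fixes f :: "'a::real_normed_vector \<Rightarrow> 'b::real_normed_vector"
  assumes L: "bounded_linear L" and r: "0 < r"
    and rem: "\<And>u. norm u \<le> r \<Longrightarrow> norm (f (z + u) - f z - L u) \<le> K * norm u ^ 2"
  shows "(f has_derivative L) (at z)"
  unfolding has_derivative_iff_norm
proof (intro conjI L)
  have "eventually (\<lambda>y. norm (norm (f y - f z - L (y - z)) / norm (y - z))
      \<le> \<bar>K\<bar> * norm (y - z)) (at z)"
    unfolding eventually_at
  proof (intro exI[of _ r] conjI ballI impI r)
    fix y assume y: "y \<noteq> z \<and> dist y z < r"
    then have "norm (f (z + (y - z)) - f z - L (y - z)) \<le> K * norm (y - z) ^ 2"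
      by (intro rem) (auto simp: dist_norm)
    also have "\<dots> \<le> \<bar>K\<bar> * norm (y - z) ^ 2"
      by (intro mult_right_mono) auto
    finally show "norm (norm (f y - f z - L (y - z)) / norm (y - z)) \<le> \<bar>K\<bar> * norm (y - z)"
      using y by (simp add: divide_le_eq power2_eq_square mult.assoc)
  qed
  moreover have "((\<lambda>y. \<bar>K\<bar> * norm (y - z)) \<longlongrightarrow> 0) (at z)"
    using tendsto_mult_left[OF tendsto_norm_zero[OF LIM_zero[OF tendsto_ident_at]], of "\<bar>K\<bar>"]
    by simp
  ultimately show "((\<lambda>y. norm (f y - f z - L (y - z)) / norm (y - z)) \<longlongrightarrow> 0) (at z)"
    by (rule Lim_null_comparison)
qed

lemma has_complex_derivative_if_second_differences_le:
  fixes \<Phi> :: "complex^'n \<Rightarrow> complex"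
  assumes \<Phi>: "second_differences_le \<Phi> z r K" and r: "0 < r"
  shows "\<exists>D. (\<Phi> has_derivative D) (at z) \<and> (\<forall>c x. D (c *s x) = c * D x)"
proof -
  define d where "d i = lim (diff_quotient \<Phi> z (axis i 1))" for i
  have d: "diff_quotient \<Phi> z (axis i 1) \<longlonglongrightarrow> d i" for i
    using convergent_diff_quotient[OF \<Phi> r] by (simp add: d_def convergent_LIMSEQ_iff)
  define D where "D u = (\<Sum>i\<in>UNIV. u $ i * d i)" for u :: "complex^'n"
  have D_hom: "D (c *s u) = c * D u" for c u
    by (simp add: D_def sum_distrib_left mult.assoc)
  have "linear D"
  proof (rule linearI)
    show "D (x + y) = D x + D y" for x y
      by (simp add: D_def distrib_right sum.distrib)
    show "D (a *\<^sub>R x) = a *\<^sub>R D x" for a x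
      by (simp add: D_def scaleR_sum_right)
  qed
  define err where
    "err u n = norm (\<Phi> (z + u) - \<Phi> z - (\<Sum>i\<in>UNIV. u $ i * diff_quotient \<Phi> z (axis i 1) n))"
    for u n
  have "(\<lambda>n. 1 / real (Suc n)) \<longlonglongrightarrow> 0"
    by (rule LIMSEQ_Suc[OF lim_const_over_n])
  then have "eventually (\<lambda>n. 1 / real (Suc n) < r) sequentially"
    using r by (intro order_tendstoD) auto
  then have ev: "eventually (\<lambda>n.
      err u n \<le> K * (norm u ^ 2 + (\<Sum>i\<in>UNIV. norm (u $ i)) / real (Suc n))) sequentially"
    if "norm u \<le> r" for u
    unfolding err_def by eventually_elim (use diff_quotient_linearization_le[OF \<Phi> that] in simp)
  have "norm (\<Phi> (z + u) - \<Phi> z - D u) \<le> K * norm u ^ 2" if "norm u \<le> r" for u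
  proof -
    have "(\<lambda>n. K * (norm u ^ 2 + (\<Sum>i\<in>UNIV. norm (u $ i)) / real (Suc n)))
        \<longlonglongrightarrow> K * (norm u ^ 2 + 0)"
      by (intro tendsto_intros LIMSEQ_Suc[OF lim_const_over_n])
    moreover have "err u \<longlonglongrightarrow> norm (\<Phi> (z + u) - \<Phi> z - D u)"
      unfolding err_def D_def by (intro tendsto_intros d)
    ultimately show ?thesis
      using tendsto_le[OF trivial_limit_sequentially _ _ ev[OF that]] by simp
  qed
  with \<open>linear D\<close> have "(\<Phi> has_derivative D) (at z)"
    by (intro has_derivative_if_remainder_quadratic[OF _ r])
      (simp_all add: linear_conv_bounded_linear)
  with D_hom show ?thesis
    by blast
qed

section \<open>Second differences of entire functions\<close>

lemma entire_taylor_coeff_le: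
  fixes \<phi> :: "complex \<Rightarrow> complex"
  assumes hol: "\<phi> holomorphic_on UNIV" and "0 < R" and S: "\<And>\<zeta>. norm \<zeta> \<le> R \<Longrightarrow> norm (\<phi> \<zeta>) \<le> S"
  shows "norm ((deriv ^^ n) \<phi> 0 / fact n) \<le> S / R ^ n"
proof -
  have "norm ((deriv ^^ n) \<phi> 0) \<le> fact n * S / R ^ n"
    using \<open>0 < R\<close> by (intro Cauchy_inequality)
      (auto intro: holomorphic_on_subset[OF hol] holomorphic_on_imp_continuous_on S)
  then show ?thesis
    by (simp add: norm_divide field_simps)
qed

lemma entire_second_order_remainder_le:
  fixes \<phi> :: "complex \<Rightarrow> complex"
  assumes hol: "\<phi> holomorphic_on UNIV" and S: "\<And>\<zeta>. norm \<zeta> \<le> 2 \<Longrightarrow> norm (\<phi> \<zeta>) \<le> S"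
    and t: "norm t \<le> 1"
  shows "norm (\<phi> t - \<phi> 0 - t * deriv \<phi> 0) \<le> S * norm t ^ 2"
proof -
  define a where "a n = (deriv ^^ n) \<phi> 0 / fact n" for n
  have sums: "(\<lambda>n. a n * t ^ n) sums \<phi> t"
    using holomorphic_power_series[of \<phi> 0 3 t] hol t unfolding a_def
    by (auto intro: holomorphic_on_subset)
  have a: "norm (a n) \<le> S / 2 ^ n" for n
    unfolding a_def by (rule entire_taylor_coeff_le[OF hol _ S]) simp_all
  have "0 \<le> S"
    using order_trans[OF norm_ge_zero S[of 0]] by simp
  have tail: "(\<lambda>n. a (n + 2) * t ^ (n + 2)) sums (\<phi> t - \<phi> 0 - t * deriv \<phi> 0)"
  proof -
    have "(\<Sum>i<2. a i * t ^ i) = \<phi> 0 + t * deriv \<phi> 0"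
      by (simp add: a_def eval_nat_numeral)
    then show ?thesis
      using sums_split_initial_segment[OF sums, of 2] by (simp add: diff_diff_eq)
  qed
  have term_le: "norm (a (n + 2) * t ^ (n + 2)) \<le> S * norm t ^ 2 / 4 * (1 / 2) ^ n" for n
  proof -
    have "norm (a (n + 2) * t ^ (n + 2)) = norm (a (n + 2)) * (norm t ^ n * norm t ^ 2)"
      by (simp add: norm_mult norm_power power_add power2_eq_square)
    also have "\<dots> \<le> S / 2 ^ (n + 2) * (1 * norm t ^ 2)"
      by (intro mult_mono a) (auto simp: power_le_one t \<open>0 \<le> S\<close>)
    also have "\<dots> = S * norm t ^ 2 / 4 * (1 / 2) ^ n"
      by (simp add: power_add field_simps)
    finally show ?thesis .
  qed
  have geom: "(\<lambda>n. S * norm t ^ 2 / 4 * (1 / 2) ^ n) sums (S * norm t ^ 2 / 2)"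
    using sums_mult[OF geometric_sums[of "1/2::real"], of "S * norm t ^ 2 / 4"] by simp
  have "norm (\<phi> t - \<phi> 0 - t * deriv \<phi> 0) = norm (\<Sum>n. a (n + 2) * t ^ (n + 2))"
    using tail by (simp add: sums_iff)
  also have "\<dots> \<le> (\<Sum>n. S * norm t ^ 2 / 4 * (1 / 2) ^ n)"
    using geom by (intro norm_suminf_le term_le) (simp add: sums_iff)
  also have "\<dots> = S * norm t ^ 2 / 2"
    using geom by (simp add: sums_iff)
  also have "\<dots> \<le> S * norm t ^ 2"
    using \<open>0 \<le> S\<close> by simp
  finally show ?thesis .
qed

lemma has_field_derivative_along_line:
  fixes f :: "complex^'n \<Rightarrow> complex"
  assumes D: "(f has_derivative D) (at (p + \<zeta> *s q))" and hom: "\<And>c x. D (c *s x) = c * D x"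
  shows "((\<lambda>\<zeta>. f (p + \<zeta> *s q)) has_field_derivative D q) (at \<zeta>)"
proof -
  have "bounded_linear (\<lambda>t::complex. t *s q)"
    by (simp add: linear_conv_bounded_linear[symmetric] linear_iff vec_eq_iff algebra_simps)
  then have "((\<lambda>\<zeta>. p + \<zeta> *s q) has_derivative (\<lambda>t. t *s q)) (at \<zeta>)"
    using has_derivative_add[OF has_derivative_const bounded_linear_imp_has_derivative] by fastforce
  from has_derivative_compose[OF this D]
  have "((\<lambda>\<zeta>. f (p + \<zeta> *s q)) has_derivative (\<lambda>t. D (t *s q))) (at \<zeta>)" .
  moreover have "(\<lambda>t. D (t *s q)) = (*) (D q)"
    by (auto simp: hom mult.commute)
  ultimately show ?thesis
    by (simp add: has_field_derivative_def)
qed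

lemma entire_cn_holomorphic_along_line:
  assumes "entire_cn f"
  shows "(\<lambda>\<zeta>. f (p + \<zeta> *s q)) holomorphic_on UNIV"
proof -
  have "(\<lambda>\<zeta>. f (p + \<zeta> *s q)) field_differentiable at \<zeta>" for \<zeta>
  proof -
    obtain D where "(f has_derivative D) (at (p + \<zeta> *s q))" "\<And>c x. D (c *s x) = c * D x"
      using assms unfolding entire_cn_def by blast
    then show ?thesis
      unfolding field_differentiable_def by (blast intro: has_field_derivative_along_line)
  qed
  then show ?thesis
    by (simp add: holomorphic_on_def field_differentiable_at_within)
qed

lemma entire_cn_remainder_le:
  fixes f :: "complex^'n \<Rightarrow> complex"
  assumes f: "entire_cn f" and D: "(f has_derivative D) (at p)" "\<And>c x. D (c *s x) = c * D x"
    and r: "0 < r" and S: "\<And>x. norm x \<le> 2 * r \<Longrightarrow> norm (f (p + x)) \<le> S"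
    and y: "norm y \<le> r"
  shows "norm (f (p + y) - f p - D y) \<le> S / r^2 * norm y ^ 2"
proof (cases "y = 0")
  case True
  then show ?thesis
    using D(2)[of 0 0] by simp
next
  case False
  define e where "e = complex_of_real (r / norm y) *s y"
  define t where "t = complex_of_real (norm y / r)"
  define \<phi> where "\<phi> \<zeta> = f (p + \<zeta> *s e)" for \<zeta>
  have norm_e: "norm e = r"
    unfolding e_def norm_vec_smult norm_of_real using False r by simp
  have norm_t: "norm t = norm y / r"
    unfolding t_def norm_of_real using r by simp
  have "t * complex_of_real (r / norm y) = 1"
    unfolding t_def of_real_mult[symmetric] using False r by simp
  then have te: "t *s e = y"
    by (simp add: e_def vector_smult_assoc)
  have "\<phi> holomorphic_on UNIV"
    unfolding \<phi>_def by (rule entire_cn_holomorphic_along_line[OF f])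
  moreover have "norm (\<phi> \<zeta>) \<le> S" if "norm \<zeta> \<le> 2" for \<zeta>
    unfolding \<phi>_def using that r by (intro S) (simp add: norm_vec_smult norm_e mult_right_mono)
  moreover have "norm t \<le> 1"
    using y r by (simp add: norm_t)
  ultimately have "norm (\<phi> t - \<phi> 0 - t * deriv \<phi> 0) \<le> S * norm t ^ 2"
    by (rule entire_second_order_remainder_le)
  moreover have "deriv \<phi> 0 = D e"
    unfolding \<phi>_def using has_field_derivative_along_line[of f D p 0 e] D
    by (simp add: DERIV_imp_deriv)
  moreover have "t * D e = D y"
    using D(2)[of t e] te by simp
  ultimately show ?thesis
    using r by (simp add: \<phi>_def te norm_t power_divide)
qed

lemma second_differences_le_entire_cn:
  fixes f :: "complex^'n \<Rightarrow> complex"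
  assumes f: "entire_cn f" and r: "0 < r" and S: "\<And>x. norm x \<le> 2 * r \<Longrightarrow> norm (f (p + x)) \<le> S"
  shows "second_differences_le f p r (S / r^2)"
  unfolding second_differences_le_def
proof (intro allI impI)
  fix ys :: "(complex \<times> (complex^'n)) list"
  assume ys: "balanced ys" "\<forall>(c, y)\<in>set ys. norm y \<le> r"
  obtain D where D: "(f has_derivative D) (at p)" "\<And>c x. D (c *s x) = c * D x"
    using f unfolding entire_cn_def by blast
  have "(\<Sum>(c, y)\<leftarrow>ys. c * (f p + D y)) = 0"
    using ys(1) has_derivative_linear[OF D(1)] D(2) by (rule balanced_annihilates_affine)
  moreover have "(\<Sum>(c, y)\<leftarrow>ys. c * (f (p + y) - f p - D y)) =
      (\<Sum>(c, y)\<leftarrow>ys. c * f (p + y)) - (\<Sum>(c, y)\<leftarrow>ys. c * (f p + D y))"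
    by (induction ys) (auto simp: algebra_simps)
  ultimately have eq: "(\<Sum>(c, y)\<leftarrow>ys. c * f (p + y)) = (\<Sum>(c, y)\<leftarrow>ys. c * (f (p + y) - f p - D y))"
    by simp
  have "norm (f (p + y) - f p - D y) \<le> S / r^2 * norm y ^ 2" if "(c, y) \<in> set ys" for c y
    using ys(2) that by (intro entire_cn_remainder_le[OF f D r S]) auto
  then show "norm (\<Sum>(c, y)\<leftarrow>ys. c * f (p + y)) \<le> S / r^2 * (\<Sum>(c, y)\<leftarrow>ys. norm c * norm y ^ 2)"
    unfolding eq by (intro norm_sum_list_comb_le) fastforce
qed

section \<open>Pairing the slices with a functional\<close>

lemma second_differences_le_weighted_slice:
  fixes h :: "complex^('a::finite + 'b::finite) \<Rightarrow> complex"
  assumes h: "h \<in> Hspace (G \<times> W) (tensor_family M N)" and "g \<in> G" "\<omega> \<in> W" "0 \<le> N \<omega> w"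
    and "0 < C" "0 < r" and C: "\<And>x. norm x \<le> 2 * r \<Longrightarrow> C \<le> M g (z + x)"
  shows "second_differences_le (\<lambda>x. complex_of_real (N \<omega> w) * h (cjoin x w)) z r
    (hseminorm (tensor_family M N) (g, \<omega>) h / C / r^2)"
proof (rule second_differences_le_entire_cn)
  show "entire_cn (\<lambda>x. complex_of_real (N \<omega> w) * h (cjoin x w))"
    using h by (intro entire_cn_cmult entire_cn_slice_left) (simp add: Hspace_def)
  show "norm (complex_of_real (N \<omega> w) * h (cjoin (z + x) w))
      \<le> hseminorm (tensor_family M N) (g, \<omega>) h / C" if "norm x \<le> 2 * r" for x
    unfolding norm_mult norm_of_real abs_of_nonneg[OF assms(4)]
    using C[OF that] by (rule tensor_slice_le_hseminorm[OF h assms(2-5)])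
qed (rule \<open>0 < r\<close>)

lemma entire_cn_pairing_slices:
  fixes h :: "complex^('a::finite + 'b::finite) \<Rightarrow> complex"
  assumes M: "defining_family G M" and N: "defining_family W N"
    and h: "h \<in> Hspace (G \<times> W) (tensor_family M N)" and v: "v \<in> Hdual W N"
  shows "entire_cn (\<lambda>z. v (\<lambda>w. h (cjoin z w)))"
  unfolding entire_cn_def
proof
  fix z :: "complex^'a"
  obtain g \<rho> C where g: "g \<in> G" "0 < \<rho>" "0 < C" and C: "\<And>x. norm (x - z) \<le> \<rho> \<Longrightarrow> C \<le> M g x"
    using defining_family_locally_positive[OF M, of z] by blast
  obtain F Cv where F: "finite F" "F \<subseteq> W" "0 \<le> Cv"
    and vb: "\<And>f B. f \<in> Hspace W N \<Longrightarrow> (\<And>\<omega> w. \<omega> \<in> F \<Longrightarrow> N \<omega> w * norm (f w) \<le> B \<omega>) \<Longrightarrow>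
       norm (v f) \<le> Cv * (\<Sum>\<omega>\<in>F. B \<omega>)"
    using Hdual_bound[OF v] by blast
  have N0: "\<forall>\<omega>\<in>W. \<forall>w. 0 \<le> N \<omega> w"
    using defining_family_nonneg[OF N] by blast
  define r where "r = \<rho> / 2"
  have r: "0 < r"
    using g(2) by (simp add: r_def)
  define A where "A \<omega> = hseminorm (tensor_family M N) (g, \<omega>) h / C / r^2" for \<omega>
  have slice: "second_differences_le (\<lambda>x. complex_of_real (N \<omega> w) * h (cjoin x w)) z r (A \<omega>)"
    if "\<omega> \<in> F" for \<omega> w
    unfolding A_def using that F(2) N0 g r
    by (intro second_differences_le_weighted_slice[OF h] C) (auto simp: r_def)
  have "second_differences_le (\<lambda>z. v (\<lambda>w. h (cjoin z w))) z r (Cv * (\<Sum>\<omega>\<in>F. A \<omega>))"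
    unfolding second_differences_le_def
  proof (intro allI impI)
    fix ys :: "(complex \<times> (complex^'a)) list"
    assume ys: "balanced ys" "\<forall>(c, y)\<in>set ys. norm y \<le> r"
    define Q where "Q = (\<Sum>(c, y)\<leftarrow>ys. norm c * norm y ^ 2)"
    define fs where "fs = map (\<lambda>(c, y). (c, \<lambda>w. h (cjoin (z + y) w))) ys"
    have "\<forall>(c, f)\<in>set fs. f \<in> Hspace W N"
      using Hspace_slice[OF M N h] by (auto simp: fs_def)
    note comb = Hdual_sum_list[OF v N0 this]
    have fs_eval: "(\<lambda>w. \<Sum>(c, f)\<leftarrow>fs. c * f w) = (\<lambda>w. \<Sum>(c, y)\<leftarrow>ys. c * h (cjoin (z + y) w))"
      and fs_pair: "(\<Sum>(c, f)\<leftarrow>fs. c * v f) = (\<Sum>(c, y)\<leftarrow>ys. c * v (\<lambda>w. h (cjoin (z + y) w)))"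
      by (simp_all add: fs_def o_def case_prod_unfold)
    have "N \<omega> w * norm (\<Sum>(c, y)\<leftarrow>ys. c * h (cjoin (z + y) w)) \<le> A \<omega> * Q"
      if "\<omega> \<in> F" for \<omega> w
    proof -
      have "(\<Sum>(c, y)\<leftarrow>ys. c * (complex_of_real (N \<omega> w) * h (cjoin (z + y) w))) =
          complex_of_real (N \<omega> w) * (\<Sum>(c, y)\<leftarrow>ys. c * h (cjoin (z + y) w))"
        by (induction ys) (auto simp: algebra_simps)
      then show ?thesis
        using second_differences_leD[OF slice[of \<omega> w, OF that] ys] that F(2) N0
        by (auto simp: Q_def norm_mult)
    qed
    then have "norm (v (\<lambda>w. \<Sum>(c, f)\<leftarrow>fs. c * f w)) \<le> Cv * (\<Sum>\<omega>\<in>F. A \<omega> * Q)"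
      using comb unfolding fs_eval by (intro vb) auto
    then show "norm (\<Sum>(c, y)\<leftarrow>ys. c * v (\<lambda>w. h (cjoin (z + y) w)))
        \<le> Cv * (\<Sum>\<omega>\<in>F. A \<omega>) * (\<Sum>(c, y)\<leftarrow>ys. norm c * norm y ^ 2)"
      using comb by (simp add: fs_eval fs_pair Q_def sum_distrib_right mult.assoc)
  qed
  then show "\<exists>D. ((\<lambda>z. v (\<lambda>w. h (cjoin z w))) has_derivative D) (at z) \<and>
      (\<forall>c x. D (c *s x) = c * D x)"
    using r by (rule has_complex_derivative_if_second_differences_le)
qed

theorem lemma3p9:
  fixes G :: "'g set" and M :: "'g \<Rightarrow> complex ^ 'a \<Rightarrow> real"
    and W :: "'o set" and N :: "'o \<Rightarrow> complex ^ 'b \<Rightarrow> real"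
    and h :: "complex ^ ('a + 'b) \<Rightarrow> complex"
  assumes M: "defining_family G M"
    and N: "defining_family W N"
    and h: "h \<in> Hspace (G \<times> W) (tensor_family M N)"
    and I: "\<forall>\<omega>\<in>W. \<exists>\<omega>'\<in>W. \<exists>L :: complex ^ 'b \<Rightarrow> real.
              bounded (range L) \<and> integrable lborel L \<and> (\<forall>w. 0 \<le> L w) \<and>
              (\<forall>w. N \<omega> w \<le> L w * N \<omega>' w) \<and> (L \<longlongrightarrow> 0) at_infinity"
    and II: "\<forall>\<omega>\<in>W. \<exists>\<omega>'\<in>W. \<exists>B :: (complex ^ 'b) set. \<exists>C>0. open B \<and> 0 \<in> B \<and>
              (\<forall>w w'. w' \<in> B \<longrightarrow> N \<omega> w \<le> C * N \<omega>' (w + w'))"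
  shows "(\<forall>z. (\<lambda>w. h (cjoin z w)) \<in> Hspace W N) \<and>
         (\<forall>v\<in>Hdual W N. (\<lambda>z. v (\<lambda>w. h (cjoin z w))) \<in> Hspace G M)"
proof -
  have "(\<lambda>w. h (cjoin z w)) \<in> Hspace W N" for z
    using M N h by (rule Hspace_slice)
  moreover have "(\<lambda>z. v (\<lambda>w. h (cjoin z w))) \<in> Hspace G M" if "v \<in> Hdual W N" for v
    using entire_cn_pairing_slices[OF M N h that] bdd_above_weighted_pairing_slices[OF M N h that]
    by (simp add: Hspace_def)
  ultimately show ?thesis
    by blast
qed

end
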